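(* Let $z,w>0$ be such that $\mathrm{DAG}(z,w)<\infty$, let $G$ be a random labelled DAG drawn from the Boltzmann model with parameters $(z,w)$, and let $N_1,N_2$ be the sizes of the first two layers of its root-layering ($N_2=0$ if there is only one layer or none). Then for every integer $n_1\ge1$ with $\mathbb P_{z,w}[N_1=n_1]>0$ and every integer $n_2\ge0$, \[\mathbb P_{z,w}[N_2=n_2\mid N_1=n_1]=\frac{\left((1-(1+w)^{-n_1})z\right)^{n_2}}{(1+w)^{\binom{n_2}2}n_2!}\cdot\frac{\mathrm{Set}(-(1+w)^{-n_2}z,w)}{\mathrm{Set}(-(1+w)^{-n_1}z,w)}.\] (By the time-homogeneity of the layer-size chain, this also gives $\mathbb P_{z,w}[N_{k+1}=n_2\mid N_k=n_1]$ for every $k\ge1$.)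
   Context: $\mathrm{Set}(z,w)=\sum_{n\ge0}\frac{z^n}{(1+w)^{\binom n2}n!}$. A labelled DAG with $n$ vertices is a directed acyclic graph on vertex set $\{1,\dots,n\}$; $v(G)$, $e(G)$ denote its numbers of vertices and edges; a source is a vertex of in-degree $0$. $\mathrm{DAG}(z,w)=\sum_G \frac{z^{v(G)}w^{e(G)}}{(1+w)^{\binom{v(G)}{2}}v(G)!}$ over all labelled DAGs. The Boltzmann model with parameters $(z,w)$ assigns probability $\frac{z^{v(G)}w^{e(G)}}{(1+w)^{\binom{v(G)}{2}}v(G)!\,\mathrm{DAG}(z,w)}$ to each labelled DAG $G$. The root-layering of a DAG $G=(V,E)$ is the ordered partition $(V_1,\dots,V_k)$ of $V$ where $V_i$ is the set of sources of the graph obtained from $G$ by deleting $V_1\cup\dots\cup V_{i-1}$; $N_i=|V_i|$. *)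

theory Defs
  imports Complex_Main
begin

definition is_dag :: "nat \<Rightarrow> (nat \<times> nat) set \<Rightarrow> bool" where
  "is_dag n E \<longleftrightarrow> E \<subseteq> {1..n} \<times> {1..n} \<and> acyclic E"

definition SetGF :: "real \<Rightarrow> real \<Rightarrow> real" where
  "SetGF z w = (\<Sum>n. z ^ n / ((1 + w) ^ (n choose 2) * fact n))"

definition bweight :: "real \<Rightarrow> real \<Rightarrow> nat \<Rightarrow> (nat \<times> nat) set \<Rightarrow> real" where
  "bweight z w n E = z ^ n * w ^ card E / ((1 + w) ^ (n choose 2) * fact n)"

definition dag_weight_n :: "real \<Rightarrow> real \<Rightarrow> (nat \<Rightarrow> (nat \<times> nat) set \<Rightarrow> bool) \<Rightarrow> nat \<Rightarrow> real" where
  "dag_weight_n z w P n = (\<Sum>E\<in>{E. is_dag n E \<and> P n E}. bweight z w n E)"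

text \<open>DAG(z,w) < infinity: the (nonnegative) series over all labelled DAGs converges.\<close>
definition DAG_finite :: "real \<Rightarrow> real \<Rightarrow> bool" where
  "DAG_finite z w \<longleftrightarrow> summable (dag_weight_n z w (\<lambda>_ _. True))"

definition DAG_gf :: "real \<Rightarrow> real \<Rightarrow> real" where
  "DAG_gf z w = (\<Sum>n. dag_weight_n z w (\<lambda>_ _. True) n)"

definition boltzmann_prob :: "real \<Rightarrow> real \<Rightarrow> (nat \<Rightarrow> (nat \<times> nat) set \<Rightarrow> bool) \<Rightarrow> real" where
  "boltzmann_prob z w P = (\<Sum>n. dag_weight_n z w P n) / DAG_gf z w"

definition sources :: "nat set \<Rightarrow> (nat \<times> nat) set \<Rightarrow> nat set" where
  "sources V E = {v \<in> V. \<forall>u\<in>V. (u, v) \<notin> E}"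

fun rest :: "nat set \<Rightarrow> (nat \<times> nat) set \<Rightarrow> nat \<Rightarrow> nat set" where
  "rest V E 0 = V"
| "rest V E (Suc k) = rest V E k - sources (rest V E k) E"

text \<open>Root layer V_i (1-indexed): root_layer V E (Suc k) = V_(k+1); empty beyond the last layer.\<close>
definition root_layer :: "nat set \<Rightarrow> (nat \<times> nat) set \<Rightarrow> nat \<Rightarrow> nat set" where
  "root_layer V E i = sources (rest V E (i - 1)) E"

definition layer_size :: "nat \<Rightarrow> (nat \<times> nat) set \<Rightarrow> nat \<Rightarrow> nat" where
  "layer_size n E i = card (root_layer {1..n} E i)"

end

theory Submission
  imports Defs "HOL-Library.FuncSet"
begin

text \<open>Write q = 1 + w. Deleting the first root layer, of size k, from a DAG leaves a DAG in which
  every source must receive at least one edge from the deleted layer; compared with arbitrary edges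
  out of that layer this weights each source by 1 - q powi - k. Hence the Boltzmann weight of
  N1 = k is the k-th term of Set(z, w) times the generating function of DAGs whose sources are
  marked by u = 1 - q powi - k, and inclusion-exclusion over sets of marked sources identifies the
  latter with Set((u - 1) z, w) DAG(z, w). Deleting the second layer in the same way gives the
  weight of N1 = k, N2 = j, and the quotient of the two weights is the claimed formula.\<close>

section \<open>Sums over subsets\<close>

lemma sum_power_card_Pow:
  fixes x :: "'a::comm_semiring_1"
  assumes "finite A"
  shows "(\<Sum>K\<in>Pow A. x ^ card K) = (1 + x) ^ card A"
proof -
  have "(\<Prod>a\<in>A. x + 1) = (\<Sum>K\<in>Pow A. (\<Prod>a\<in>K. x) * (\<Prod>a\<in>A - K. 1))"
    by (rule prod_add[OF assms])
  then show ?thesis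
    by (simp add: add.commute)
qed

lemma sum_Pow_card:
  fixes G :: "nat \<Rightarrow> 'a::comm_semiring_1"
  assumes "finite A"
  shows "(\<Sum>K\<in>Pow A. G (card K)) = (\<Sum>k\<le>card A. of_nat (card A choose k) * G k)"
proof -
  have "(\<Sum>K\<in>Pow A. G (card K)) = (\<Sum>k\<le>card A. \<Sum>K | K \<in> Pow A \<and> card K = k. G (card K))"
    using assms by (intro sum.group[symmetric]) (auto intro: card_mono)
  also have "\<dots> = (\<Sum>k\<le>card A. of_nat (card {K. K \<subseteq> A \<and> card K = k}) * G k)"
    by (intro sum.cong) simp_all
  finally show ?thesis
    by (simp add: n_subsets[OF assms])
qed

lemma sum_edge_sets_by_in_neighbourhoods:
  fixes w :: "'a::comm_semiring_1" and S R :: "'v set"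
  assumes "finite S" "finite R" "\<And>v. v \<in> R \<Longrightarrow> Y v \<subseteq> Pow S"
  shows "(\<Sum>X | X \<subseteq> S \<times> R \<and> (\<forall>v\<in>R. {s. (s, v) \<in> X} \<in> Y v). w ^ card X)
       = (\<Prod>v\<in>R. \<Sum>K\<in>Y v. w ^ card K)"
proof -
  define nbhds where "nbhds X = restrict (\<lambda>v. {s. (s, v) \<in> X}) R" for X :: "('v \<times> 'v) set"
  define edges where "edges g = (SIGMA v:R. g v)\<inverse>" for g :: "'v \<Rightarrow> 'v set"
  have "(\<Sum>g\<in>PiE R Y. \<Prod>v\<in>R. w ^ card (g v))
      = (\<Sum>X | X \<subseteq> S \<times> R \<and> (\<forall>v\<in>R. {s. (s, v) \<in> X} \<in> Y v). w ^ card X)"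
  proof (rule sum.reindex_bij_witness[where i = nbhds and j = edges])
    fix g assume g: "g \<in> PiE R Y"
    have gS: "g v \<subseteq> S" if "v \<in> R" for v
      using g that assms(3) by (auto simp: PiE_iff)
    have "nbhds (edges g) = restrict g R"
      unfolding nbhds_def edges_def by (rule restrict_cong) auto
    then show "nbhds (edges g) = g"
      using PiE_restrict[OF g] by simp
    show "edges g \<in> {X. X \<subseteq> S \<times> R \<and> (\<forall>v\<in>R. {s. (s, v) \<in> X} \<in> Y v)}"
      using g gS by (auto simp: edges_def PiE_iff)
    have "card (edges g) = (\<Sum>v\<in>R. card (g v))"
      using assms(2) gS unfolding edges_def card_inverse
      by (intro card_SigmaI ballI) (auto intro: rev_finite_subset[OF assms(1)])
    then show "w ^ card (edges g) = (\<Prod>v\<in>R. w ^ card (g v))"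
      by (simp add: power_sum)
  qed (auto simp: nbhds_def edges_def)
  also have "(\<Sum>g\<in>PiE R Y. \<Prod>v\<in>R. w ^ card (g v)) = (\<Prod>v\<in>R. \<Sum>K\<in>Y v. w ^ card K)"
    using assms by (intro prod_sum_PiE[symmetric]) (auto intro: finite_subset)
  finally show ?thesis ..
qed

lemma sum_edge_sets_hitting:
  fixes w :: "'a::comm_ring_1" and S R T :: "'v set"
  assumes "finite S" "finite R" "T \<subseteq> R"
  shows "(\<Sum>X | X \<subseteq> S \<times> R \<and> (\<forall>v\<in>T. \<exists>s\<in>S. (s, v) \<in> X). w ^ card X)
       = ((1 + w) ^ card S - 1) ^ card T * (1 + w) ^ (card S * (card R - card T))"
proof -
  define Y where "Y v = (if v \<in> T then Pow S - {{}} else Pow S)" for v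
  have "{X. X \<subseteq> S \<times> R \<and> (\<forall>v\<in>T. \<exists>s\<in>S. (s, v) \<in> X)}
      = {X. X \<subseteq> S \<times> R \<and> (\<forall>v\<in>R. {s. (s, v) \<in> X} \<in> Y v)}"
    using assms(3) by (auto simp: Y_def) blast+
  then have "(\<Sum>X | X \<subseteq> S \<times> R \<and> (\<forall>v\<in>T. \<exists>s\<in>S. (s, v) \<in> X). w ^ card X)
      = (\<Prod>v\<in>R. \<Sum>K\<in>Y v. w ^ card K)"
    using sum_edge_sets_by_in_neighbourhoods[OF assms(1,2), of Y w] by (simp add: Y_def)
  also have "\<dots> = (\<Prod>v\<in>R. if v \<in> T then (1 + w) ^ card S - 1 else (1 + w) ^ card S)"
    using assms by (intro prod.cong) (simp_all add: Y_def sum_diff1 sum_power_card_Pow)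
  also have "\<dots> = ((1 + w) ^ card S - 1) ^ card T * (1 + w) ^ (card S * (card R - card T))"
    using assms by (simp add: prod.If_cases Int_absorb1 Diff_eq[symmetric] card_Diff_subset
        finite_subset power_mult mult.commute)
  finally show ?thesis .
qed

section \<open>DAGs on a finite vertex set\<close>

definition dags :: "nat set \<Rightarrow> (nat \<times> nat) set set" where
  "dags V = {E. E \<subseteq> V \<times> V \<and> acyclic E}"

lemma finite_dags: "finite V \<Longrightarrow> finite (dags V)"
  by (rule finite_subset[of _ "Pow (V \<times> V)"]) (auto simp: dags_def)

lemma finite_dag_edges: "finite V \<Longrightarrow> E \<in> dags V \<Longrightarrow> finite E"
  by (auto simp: dags_def intro: finite_subset)

lemma sources_subset: "sources V E \<subseteq> V"
  by (auto simp: sources_def)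

lemma finite_sources: "finite V \<Longrightarrow> finite (sources V E)"
  using sources_subset finite_subset by blast

lemma acyclic_if_convertible_to_acyclic:
  assumes "acyclic s" and "\<And>x y. (x, y) \<in> r \<Longrightarrow> (f x, f y) \<in> s"
  shows "acyclic r"
proof -
  have "(f x, f y) \<in> s\<^sup>+" if "(x, y) \<in> r\<^sup>+" for x y
    using that by (induction rule: trancl_induct) (auto intro: trancl_into_trancl assms(2))
  then show ?thesis
    using assms(1) by (auto simp: acyclic_def)
qed

text \<open>A path in E \<union> X can use an edge of X only as its first edge.\<close>
lemma acyclic_Un_edges_from_sources:
  assumes "acyclic E" and "Domain X \<inter> Range (E \<union> X) = {}"
  shows "acyclic (E \<union> X)"
proof -
  have path: "(x, y) \<in> E\<^sup>+ \<or> x \<in> Domain X" if "(x, y) \<in> (E \<union> X)\<^sup>+" for x y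
    using that
  proof (induction rule: trancl_induct)
    case (step y z)
    have "y \<in> Range (E \<union> X)"
      using step.hyps(1) by (metis Range.intros trancl_range)
    then have "(y, z) \<in> E"
      using step.hyps(2) assms(2) by blast
    then show ?case
      using step.IH by (auto intro: trancl_into_trancl)
  qed auto
  show ?thesis
  proof (rule acyclicI, intro allI notI)
    fix x assume cycle: "(x, x) \<in> (E \<union> X)\<^sup>+"
    then have "x \<in> Range (E \<union> X)"
      by (metis Range.intros trancl_range)
    then show False
      using path[OF cycle] assms by (auto simp: acyclic_def)
  qed
qed

lemma acyclic_map_prod_iff:
  assumes "inj_on f V" and "E \<subseteq> V \<times> V"
  shows "acyclic (map_prod f f ` E) \<longleftrightarrow> acyclic E"
proof
  assume "acyclic (map_prod f f ` E)"
  moreover have "(f x, f y) \<in> map_prod f f ` E" if "(x, y) \<in> E" for x y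
    using that by force
  ultimately show "acyclic E"
    by (rule acyclic_if_convertible_to_acyclic)
next
  assume "acyclic E"
  moreover have "(inv_into V f x, inv_into V f y) \<in> E" if xy: "(x, y) \<in> map_prod f f ` E" for x y
  proof -
    obtain a b where "(a, b) \<in> E" "x = f a" "y = f b"
      using xy by auto
    moreover have "a \<in> V" "b \<in> V"
      using calculation(1) assms(2) by auto
    ultimately show ?thesis
      using assms(1) by (simp add: inv_into_f_f)
  qed
  ultimately show "acyclic (map_prod f f ` E)"
    by (rule acyclic_if_convertible_to_acyclic)
qed

lemma sources_map_prod:
  assumes "inj_on f V" and "E \<subseteq> V \<times> V"
  shows "sources (f ` V) (map_prod f f ` E) = f ` sources V E"
proof (intro equalityI subsetI)
  fix y assume y: "y \<in> sources (f ` V) (map_prod f f ` E)"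
  then obtain v where v: "v \<in> V" "y = f v"
    by (auto simp: sources_def)
  have "(u, v) \<notin> E" if "u \<in> V" for u
    using y v that by (force simp: sources_def)
  then show "y \<in> f ` sources V E"
    using v by (auto simp: sources_def)
next
  fix y assume "y \<in> f ` sources V E"
  then obtain v where v: "v \<in> sources V E" "y = f v"
    by auto
  have "(f a, f v) \<notin> map_prod f f ` E" for a
  proof
    assume "(f a, f v) \<in> map_prod f f ` E"
    then obtain a' b where "(a', b) \<in> E" "f b = f v"
      by auto
    moreover have "v \<in> V"
      using v by (simp add: sources_def)
    ultimately show False
      using v assms unfolding inj_on_def sources_def by blast
  qed
  then show "y \<in> sources (f ` V) (map_prod f f ` E)"
    using v by (auto simp: sources_def)
qed

lemma bij_betw_dags_image:
  assumes "bij_betw f V V'"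
  shows "bij_betw (image (map_prod f f)) (dags V) (dags V')"
proof -
  have dags_eq: "dags U = {E \<in> Pow (U \<times> U). acyclic E}" for U
    by (auto simp: dags_def)
  have "bij_betw (image (map_prod f f)) (Pow (V \<times> V)) (Pow (V' \<times> V'))"
    using assms by (intro bij_betw_Pow bij_betw_map_prod)
  then show ?thesis
    unfolding dags_eq
    by (rule bij_betw_Collect) (simp add: acyclic_map_prod_iff[OF bij_betw_imp_inj_on[OF assms]])
qed

lemma sum_dags_relabel:
  fixes F :: "nat \<Rightarrow> nat \<Rightarrow> 'a::comm_monoid_add"
  assumes "bij_betw f V V'"
  shows "(\<Sum>E\<in>dags V'. F (card E) (card (sources V' E)))
       = (\<Sum>E\<in>dags V. F (card E) (card (sources V E)))"
proof -
  have inj: "inj_on f V" and V': "V' = f ` V"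
    using assms by (auto simp: bij_betw_def)
  have "(\<Sum>E\<in>dags V'. F (card E) (card (sources V' E)))
      = (\<Sum>E\<in>dags V. F (card (map_prod f f ` E)) (card (sources V' (map_prod f f ` E))))"
    by (rule sum.reindex_bij_betw[symmetric, OF bij_betw_dags_image[OF assms]])
  also have "\<dots> = (\<Sum>E\<in>dags V. F (card E) (card (sources V E)))"
  proof (rule sum.cong[OF refl])
    fix E assume "E \<in> dags V"
    then have E: "E \<subseteq> V \<times> V"
      by (simp add: dags_def)
    have "card (map_prod f f ` E) = card E"
      using inj E by (intro card_image) (auto intro: inj_on_subset map_prod_inj_on)
    moreover have "card (sources V' (map_prod f f ` E)) = card (sources V E)"
      unfolding V' sources_map_prod[OF inj E]
      using inj sources_subset by (intro card_image) (rule inj_on_subset)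
    ultimately show "F (card (map_prod f f ` E)) (card (sources V' (map_prod f f ` E)))
        = F (card E) (card (sources V E))"
      by simp
  qed
  finally show ?thesis .
qed

lemma sum_dags_relabel_interval:
  fixes F :: "nat \<Rightarrow> nat \<Rightarrow> 'a::comm_monoid_add"
  assumes "finite V"
  shows "(\<Sum>E\<in>dags V. F (card E) (card (sources V E)))
       = (\<Sum>E\<in>dags {1..card V}. F (card E) (card (sources {1..card V} E)))"
proof -
  obtain f where "bij_betw f {1..card V} V"
    using finite_same_card_bij[OF _ assms] by force
  then show ?thesis
    by (rule sum_dags_relabel)
qed

section \<open>Splitting off a set of sources\<close>

lemma bij_betw_dags_split_sources:
  assumes "S \<subseteq> V"
  shows "bij_betw (\<lambda>(E, X). E \<union> X) (dags (V - S) \<times> Pow (S \<times> (V - S)))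
           {E \<in> dags V. S \<subseteq> sources V E}"
proof (rule bij_betw_byWitness[where f' = "\<lambda>E. (E \<inter> (V - S) \<times> (V - S), E \<inter> S \<times> (V - S))"])
  show "\<forall>p \<in> dags (V - S) \<times> Pow (S \<times> (V - S)).
          (\<lambda>E. (E \<inter> (V - S) \<times> (V - S), E \<inter> S \<times> (V - S))) ((\<lambda>(E, X). E \<union> X) p) = p"
    by (auto simp: dags_def)
  show "\<forall>E \<in> {E \<in> dags V. S \<subseteq> sources V E}.
          (\<lambda>(E, X). E \<union> X) (E \<inter> (V - S) \<times> (V - S), E \<inter> S \<times> (V - S)) = E"
    using assms by (auto simp: dags_def sources_def)
  have "E \<union> X \<in> dags V \<and> S \<subseteq> sources V (E \<union> X)"
    if "E \<in> dags (V - S)" "X \<subseteq> S \<times> (V - S)" for E X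
  proof -
    have "Domain X \<inter> Range (E \<union> X) = {}"
      using that by (auto simp: dags_def)
    then have "acyclic (E \<union> X)"
      using that(1) by (intro acyclic_Un_edges_from_sources) (simp add: dags_def)
    then show ?thesis
      using that assms by (auto simp: dags_def sources_def)
  qed
  then show "(\<lambda>(E, X). E \<union> X) ` (dags (V - S) \<times> Pow (S \<times> (V - S)))
      \<subseteq> {E \<in> dags V. S \<subseteq> sources V E}"
    by auto
  show "(\<lambda>E. (E \<inter> (V - S) \<times> (V - S), E \<inter> S \<times> (V - S))) ` {E \<in> dags V. S \<subseteq> sources V E}
      \<subseteq> dags (V - S) \<times> Pow (S \<times> (V - S))"
    by (auto simp: dags_def intro: acyclic_subset)
qed

lemma sum_dags_sources_superset:
  assumes "S \<subseteq> V"
  shows "(\<Sum>E | E \<in> dags V \<and> S \<subseteq> sources V E. H E)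
       = (\<Sum>E\<in>dags (V - S). \<Sum>X\<in>Pow (S \<times> (V - S)). H (E \<union> X))"
proof -
  have "(\<Sum>E | E \<in> dags V \<and> S \<subseteq> sources V E. H E)
      = (\<Sum>p\<in>dags (V - S) \<times> Pow (S \<times> (V - S)). H ((\<lambda>(E, X). E \<union> X) p))"
    by (rule sum.reindex_bij_betw[symmetric, OF bij_betw_dags_split_sources[OF assms]])
  then show ?thesis
    by (simp add: sum.cartesian_product case_prod_unfold)
qed

lemma card_Un_edges_from_sources:
  assumes "finite V" "S \<subseteq> V" "E \<in> dags (V - S)" "X \<subseteq> S \<times> (V - S)"
  shows "card (E \<union> X) = card E + card X"
proof (rule card_Un_disjoint)
  show "finite E"
    using assms(1,3) finite_dag_edges[of "V - S"] by simp
  have "finite (S \<times> (V - S))"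
    using assms(1,2) finite_subset by blast
  then show "finite X"
    using assms(4) finite_subset by blast
  show "E \<inter> X = {}"
    using assms(3,4) by (auto simp: dags_def)
qed

lemma sum_dags_sources_superset_power_card:
  fixes w :: "'a::comm_semiring_1"
  assumes "finite V" "S \<subseteq> V"
  shows "(\<Sum>E | E \<in> dags V \<and> S \<subseteq> sources V E. w ^ card E)
       = (\<Sum>E\<in>dags (V - S). w ^ card E) * (1 + w) ^ (card S * card (V - S))"
proof -
  have "finite (S \<times> (V - S))"
    using assms finite_subset by blast
  then have "(\<Sum>X\<in>Pow (S \<times> (V - S)). w ^ card X) = (1 + w) ^ (card S * card (V - S))"
    by (simp add: sum_power_card_Pow card_cartesian_product)
  moreover have "(\<Sum>E | E \<in> dags V \<and> S \<subseteq> sources V E. w ^ card E)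
      = (\<Sum>E\<in>dags (V - S). w ^ card E * (\<Sum>X\<in>Pow (S \<times> (V - S)). w ^ card X))"
    unfolding sum_dags_sources_superset[OF assms(2)] sum_distrib_left
  proof (intro sum.cong refl)
    fix E X assume "E \<in> dags (V - S)" "X \<in> Pow (S \<times> (V - S))"
    then show "w ^ card (E \<union> X) = w ^ card E * w ^ card X"
      using assms by (simp add: card_Un_edges_from_sources power_add)
  qed
  ultimately show ?thesis
    by (simp add: sum_distrib_right)
qed

lemma sources_Un_edges_from_sources:
  assumes "E \<subseteq> (V - S) \<times> (V - S)" "X \<subseteq> S \<times> (V - S)" "S \<subseteq> V"
  shows "sources V (E \<union> X) = S \<union> {v \<in> sources (V - S) E. \<forall>s\<in>S. (s, v) \<notin> X}"
    and "sources (V - S) (E \<union> X) = sources (V - S) E"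
  using assms by (auto simp: sources_def)

lemma sum_edges_from_sources_keeping_sources:
  fixes w :: "'a::comm_ring_1"
  assumes "finite V" "S \<subseteq> V" "E \<in> dags (V - S)"
  shows "(\<Sum>X | X \<subseteq> S \<times> (V - S) \<and> sources V (E \<union> X) = S. w ^ card (E \<union> X))
       = w ^ card E * ((1 + w) ^ card S - 1) ^ card (sources (V - S) E)
         * (1 + w) ^ (card S * (card (V - S) - card (sources (V - S) E)))"
proof -
  have fin: "finite S" "finite (V - S)"
    using assms(1,2) finite_subset by auto
  have "E \<subseteq> (V - S) \<times> (V - S)"
    using assms(3) by (simp add: dags_def)
  then have "{X. X \<subseteq> S \<times> (V - S) \<and> sources V (E \<union> X) = S}
      = {X. X \<subseteq> S \<times> (V - S) \<and> (\<forall>v\<in>sources (V - S) E. \<exists>s\<in>S. (s, v) \<in> X)}"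
    using sources_Un_edges_from_sources(1)[OF _ _ assms(2)] sources_subset[of "V - S" E]
    by blast
  then have "(\<Sum>X | X \<subseteq> S \<times> (V - S) \<and> sources V (E \<union> X) = S. w ^ card (E \<union> X))
      = w ^ card E * (\<Sum>X | X \<subseteq> S \<times> (V - S) \<and> (\<forall>v\<in>sources (V - S) E. \<exists>s\<in>S. (s, v) \<in> X).
          w ^ card X)"
    using assms by (simp add: card_Un_edges_from_sources power_add sum_distrib_left)
  then show ?thesis
    by (simp add: sum_edge_sets_hitting[OF fin sources_subset] mult.assoc)
qed

lemma sum_dags_sources_eq:
  fixes w :: "'a::comm_ring_1" and h :: "nat set \<Rightarrow> 'a"
  assumes "finite V" "S \<subseteq> V"
  shows "(\<Sum>E | E \<in> dags V \<and> sources V E = S. w ^ card E * h (sources (V - S) E))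
       = (\<Sum>E\<in>dags (V - S). w ^ card E * h (sources (V - S) E)
            * ((1 + w) ^ card S - 1) ^ card (sources (V - S) E)
            * (1 + w) ^ (card S * (card (V - S) - card (sources (V - S) E))))"
proof -
  define R where "R = V - S"
  have "(\<Sum>E | E \<in> dags V \<and> sources V E = S. w ^ card E * h (sources R E))
      = (\<Sum>E | E \<in> dags V \<and> S \<subseteq> sources V E.
           if sources V E = S then w ^ card E * h (sources R E) else 0)"
    using finite_dags[OF assms(1)] by (intro sum.mono_neutral_cong_left) auto
  also have "\<dots> = (\<Sum>E\<in>dags R. \<Sum>X\<in>Pow (S \<times> R).
      if sources V (E \<union> X) = S then w ^ card (E \<union> X) * h (sources R (E \<union> X)) else 0)"
    unfolding R_def by (rule sum_dags_sources_superset[OF assms(2)])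
  also have "\<dots> = (\<Sum>E\<in>dags R. h (sources R E)
      * (\<Sum>X | X \<subseteq> S \<times> R \<and> sources V (E \<union> X) = S. w ^ card (E \<union> X)))"
  proof (rule sum.cong[OF refl])
    fix E assume "E \<in> dags R"
    then have "sources R (E \<union> X) = sources R E" if "X \<subseteq> S \<times> R" for X
      using sources_Un_edges_from_sources(2)[of E V S X] that assms(2) by (simp add: dags_def R_def)
    moreover have "finite (Pow (S \<times> R))"
      using assms finite_subset by (auto simp: R_def)
    ultimately show "(\<Sum>X\<in>Pow (S \<times> R).
        if sources V (E \<union> X) = S then w ^ card (E \<union> X) * h (sources R (E \<union> X)) else 0)
      = h (sources R E) * (\<Sum>X | X \<subseteq> S \<times> R \<and> sources V (E \<union> X) = S. w ^ card (E \<union> X))"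
      by (simp add: sum.inter_filter[symmetric] sum_distrib_left mult.commute)
  qed
  also have "\<dots> = (\<Sum>E\<in>dags R. w ^ card E * h (sources R E)
            * ((1 + w) ^ card S - 1) ^ card (sources R E)
            * (1 + w) ^ (card S * (card R - card (sources R E))))"
    unfolding R_def
    by (intro sum.cong refl, subst sum_edges_from_sources_keeping_sources[OF assms])
      (simp_all add: mult_ac)
  finally show ?thesis
    by (simp add: R_def)
qed

section \<open>Counting sources\<close>

definition dag_source_poly :: "'a::comm_semiring_1 \<Rightarrow> nat \<Rightarrow> 'a \<Rightarrow> 'a" where
  "dag_source_poly w n u = (\<Sum>E\<in>dags {1..n}. w ^ card E * u ^ card (sources {1..n} E))"

lemma sum_dags_power_card:
  assumes "finite V"
  shows "(\<Sum>E\<in>dags V. w ^ card E) = dag_source_poly w (card V) 1"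
  using sum_dags_relabel_interval[OF assms, of "\<lambda>e s. w ^ e"]
  by (simp add: dag_source_poly_def)

text \<open>Inclusion-exclusion over the sets K of marked sources: u ^ card (sources) is the sum of
  (u - 1) ^ card K over K \<subseteq> sources, and the DAGs in which all of K are sources are
  a DAG on the remaining vertices plus arbitrary edges out of K.\<close>
lemma dag_source_poly_expansion:
  fixes w u :: "'a::comm_ring_1"
  shows "dag_source_poly w n u
       = (\<Sum>k\<le>n. of_nat (n choose k) * (u - 1) ^ k * (1 + w) ^ (k * (n - k))
                  * dag_source_poly w (n - k) 1)"
proof -
  define V where "V = {1..n}"
  have fin: "finite V" "finite (dags V)"
    by (simp_all add: V_def finite_dags)
  have "dag_source_poly w n u = (\<Sum>E\<in>dags V. \<Sum>K | K \<in> Pow V \<and> K \<subseteq> sources V E.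
      w ^ card E * (u - 1) ^ card K)"
  proof -
    have "u ^ card (sources V E) = (\<Sum>K | K \<in> Pow V \<and> K \<subseteq> sources V E. (u - 1) ^ card K)"
      for E
    proof -
      have "{K. K \<in> Pow V \<and> K \<subseteq> sources V E} = Pow (sources V E)"
        using sources_subset by blast
      then show ?thesis
        using sum_power_card_Pow[OF finite_sources[OF fin(1)], of "u - 1" E] by simp
    qed
    then show ?thesis
      by (simp add: dag_source_poly_def V_def sum_distrib_left)
  qed
  also have "\<dots> = (\<Sum>K\<in>Pow V. \<Sum>E | E \<in> dags V \<and> K \<subseteq> sources V E.
      w ^ card E * (u - 1) ^ card K)"
    using fin by (intro sum.swap_restrict) simp_all
  also have "\<dots> = (\<Sum>K\<in>Pow V. (u - 1) ^ card K * (1 + w) ^ (card K * (n - card K))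
      * dag_source_poly w (n - card K) 1)"
  proof (rule sum.cong[OF refl])
    fix K assume K: "K \<in> Pow V"
    then have "card (V - K) = n - card K"
      using fin by (simp add: card_Diff_subset finite_subset V_def)
    then show "(\<Sum>E | E \<in> dags V \<and> K \<subseteq> sources V E. w ^ card E * (u - 1) ^ card K)
        = (u - 1) ^ card K * (1 + w) ^ (card K * (n - card K)) * dag_source_poly w (n - card K) 1"
      using K fin sum_dags_sources_superset_power_card[OF fin(1), of K w]
      by (simp add: sum_distrib_right[symmetric] sum_dags_power_card mult_ac)
  qed
  also have "\<dots> = (\<Sum>k\<le>n. of_nat (n choose k) * (u - 1) ^ k * (1 + w) ^ (k * (n - k))
                  * dag_source_poly w (n - k) 1)"
    using sum_Pow_card[OF fin(1), of "\<lambda>k. (u - 1) ^ k * (1 + w) ^ (k * (n - k))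
      * dag_source_poly w (n - k) 1"]
    by (simp add: V_def mult.assoc)
  finally show ?thesis .
qed

lemma power_diff_one_split:
  fixes p :: "'a::field"
  assumes "c \<le> m" and "p \<noteq> 0"
  shows "(p - 1) ^ c * p ^ (m - c) = p ^ m * (1 - inverse p) ^ c"
proof -
  obtain d where m: "m = c + d"
    using assms(1) le_Suc_ex by blast
  have "p - 1 = p * (1 - inverse p)"
    using assms(2) by (simp add: algebra_simps)
  then show ?thesis
    by (simp add: m power_add power_mult_distrib mult_ac)
qed

lemma sum_dags_sources_eq_relabelled:
  fixes w :: "'a::field" and \<phi> :: "nat \<Rightarrow> 'a"
  assumes "finite V" "S \<subseteq> V" "card S = k" "1 + w \<noteq> 0"
  shows "(\<Sum>E | E \<in> dags V \<and> sources V E = S. w ^ card E * \<phi> (card (sources (V - S) E)))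
       = (1 + w) ^ (k * (card V - k))
         * (\<Sum>E\<in>dags {1..card V - k}. w ^ card E
              * (1 - (1 + w) powi - int k) ^ card (sources {1..card V - k} E)
              * \<phi> (card (sources {1..card V - k} E)))"
proof -
  define m where "m = card V - k"
  have m: "card (V - S) = m"
    using assms(1-3) by (simp add: card_Diff_subset finite_subset m_def)
  have split: "((1 + w) ^ k - 1) ^ c * (1 + w) ^ (k * (m - c))
      = (1 + w) ^ (k * m) * (1 - (1 + w) powi - int k) ^ c" if "c \<le> m" for c
    using power_diff_one_split[OF that, of "(1 + w) ^ k"] assms(4)
    by (simp add: power_mult power_int_minus)
  have "(\<Sum>E | E \<in> dags V \<and> sources V E = S. w ^ card E * \<phi> (card (sources (V - S) E)))
      = (\<Sum>E\<in>dags (V - S). w ^ card E * \<phi> (card (sources (V - S) E))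
          * ((1 + w) ^ k - 1) ^ card (sources (V - S) E)
          * (1 + w) ^ (k * (m - card (sources (V - S) E))))"
    using sum_dags_sources_eq[OF assms(1,2), of w "\<lambda>T. \<phi> (card T)"] by (simp add: assms(3) m)
  also have "\<dots> = (\<Sum>E\<in>dags {1..m}. w ^ card E * \<phi> (card (sources {1..m} E))
          * ((1 + w) ^ k - 1) ^ card (sources {1..m} E)
          * (1 + w) ^ (k * (m - card (sources {1..m} E))))"
    using sum_dags_relabel_interval[of "V - S"
        "\<lambda>e c. w ^ e * \<phi> c * ((1 + w) ^ k - 1) ^ c * (1 + w) ^ (k * (m - c))"] assms(1)
    by (simp add: m)
  also have "\<dots> = (1 + w) ^ (k * m) * (\<Sum>E\<in>dags {1..m}. w ^ card E
          * (1 - (1 + w) powi - int k) ^ card (sources {1..m} E) * \<phi> (card (sources {1..m} E)))"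
  proof -
    have bound: "card (sources {1..m} E) \<le> m" for E
      using card_mono[OF _ sources_subset, of "{1..m}" E] by simp
    show ?thesis
      unfolding mult.assoc split[OF bound] by (simp add: sum_distrib_left mult_ac)
  qed
  finally show ?thesis
    by (simp add: m_def)
qed

lemma sum_dags_first_layer:
  fixes w :: "'a::field" and \<phi> :: "nat \<Rightarrow> 'a"
  assumes "finite V" and "1 + w \<noteq> 0"
  shows "(\<Sum>E | E \<in> dags V \<and> card (sources V E) = k.
            w ^ card E * \<phi> (card (sources (V - sources V E) E)))
       = of_nat (card V choose k) * (1 + w) ^ (k * (card V - k))
         * (\<Sum>E\<in>dags {1..card V - k}. w ^ card E
              * (1 - (1 + w) powi - int k) ^ card (sources {1..card V - k} E)
              * \<phi> (card (sources {1..card V - k} E)))"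
    (is "?lhs = _ * ?c * ?\<Psi>")
proof -
  have "?lhs = (\<Sum>S | S \<subseteq> V \<and> card S = k.
      \<Sum>E | E \<in> {E \<in> dags V. card (sources V E) = k} \<and> sources V E = S.
        w ^ card E * \<phi> (card (sources (V - sources V E) E)))"
    by (rule sum.group[symmetric]) (use assms(1) finite_dags[OF assms(1)] sources_subset in auto)
  also have "\<dots> = (\<Sum>S | S \<subseteq> V \<and> card S = k. \<Sum>E | E \<in> dags V \<and> sources V E = S.
      w ^ card E * \<phi> (card (sources (V - S) E)))"
    by (intro sum.cong) auto
  also have "\<dots> = (\<Sum>S | S \<subseteq> V \<and> card S = k. ?c * ?\<Psi>)"
    using sum_dags_sources_eq_relabelled[OF assms(1) _ _ assms(2)] by (intro sum.cong) auto
  also have "\<dots> = of_nat (card V choose k) * ?c * ?\<Psi>"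
    by (simp add: n_subsets[OF assms(1)])
  finally show ?thesis .
qed

section \<open>Exponential generating functions\<close>

definition set_term :: "real \<Rightarrow> real \<Rightarrow> nat \<Rightarrow> real" where
  "set_term x w n = x ^ n / ((1 + w) ^ (n choose 2) * fact n)"

lemma choose_two_add: "(j + m) choose 2 = (j choose 2) + (m choose 2) + j * m"
  by (induction m) (simp_all add: numeral_2_eq_2)

lemma set_term_mult_binomial:
  assumes "j \<le> n" and "1 + w \<noteq> 0"
  shows "set_term z w n * (of_nat (n choose j) * y ^ j * (1 + w) ^ (j * (n - j)))
       = set_term (y * z) w j * set_term z w (n - j)"
proof -
  obtain m where n: "n = j + m"
    using assms(1) le_Suc_ex by blast
  have "real (n choose j) = fact n / (fact j * fact m)"
    using binomial_fact[OF assms(1)] n by simp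
  then show ?thesis
    using assms(2)
    by (simp add: set_term_def n choose_two_add power_add power_mult_distrib field_simps)
qed

lemma summable_norm_set_term:
  assumes "0 \<le> w"
  shows "summable (\<lambda>n. norm (set_term x w n))"
proof (rule summable_comparison_test[OF _ summable_exp[of "\<bar>x\<bar>"]])
  have "norm (set_term x w n) \<le> inverse (fact n) * \<bar>x\<bar> ^ n" for n
  proof -
    have "1 \<le> (1 + w) ^ (n choose 2)"
      using assms by simp
    then have "\<bar>x\<bar> ^ n / ((1 + w) ^ (n choose 2) * fact n) \<le> \<bar>x\<bar> ^ n / fact n"
      by (intro divide_left_mono) (auto intro: order_trans[OF _ mult_right_mono])
    then show ?thesis
      using assms by (simp add: set_term_def abs_mult power_abs divide_inverse mult.commute)
  qed
  then show "\<exists>N. \<forall>n\<ge>N. norm (norm (set_term x w n)) \<le> inverse (fact n) * \<bar>x\<bar> ^ n"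
    by simp
qed

lemma dag_weight_n_eq:
  "dag_weight_n z w P n = set_term z w n * (\<Sum>E | E \<in> dags {1..n} \<and> P n E. w ^ card E)"
proof -
  have "{E. is_dag n E \<and> P n E} = {E. E \<in> dags {1..n} \<and> P n E}"
    by (auto simp: is_dag_def dags_def)
  then show ?thesis
    by (simp add: dag_weight_n_def bweight_def set_term_def sum_divide_distrib sum_distrib_left)
qed

lemma dag_weight_n_True: "dag_weight_n z w (\<lambda>_ _. True) n = set_term z w n * dag_source_poly w n 1"
  using sum_dags_power_card[of "{1..n}" w] by (simp add: dag_weight_n_eq)

text \<open>The Cauchy product form of dag_source_poly_expansion.\<close>
lemma dag_source_poly_egf_sums:
  assumes "0 \<le> z" and "0 \<le> w" and "DAG_finite z w"
  shows "(\<lambda>n. set_term z w n * dag_source_poly w n u) sums (SetGF ((u - 1) * z) w * DAG_gf z w)"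
proof -
  let ?d = "dag_weight_n z w (\<lambda>_ _. True)"
  have "?d n \<ge> 0" for n
    using assms(1,2) by (simp add: dag_weight_n_def bweight_def sum_nonneg)
  then have "summable (\<lambda>n. norm (?d n))"
    using assms(3) by (simp add: DAG_finite_def)
  then have "(\<lambda>n. \<Sum>k\<le>n. set_term ((u - 1) * z) w k * ?d (n - k))
      sums ((\<Sum>k. set_term ((u - 1) * z) w k) * (\<Sum>n. ?d n))"
    by (rule Cauchy_product_sums[OF summable_norm_set_term[OF assms(2)]])
  moreover have "(\<Sum>k\<le>n. set_term ((u - 1) * z) w k * ?d (n - k))
      = set_term z w n * dag_source_poly w n u" for n
  proof -
    have "set_term z w n * (of_nat (n choose k) * (u - 1) ^ k * (1 + w) ^ (k * (n - k)))
        * dag_source_poly w (n - k) 1 = set_term ((u - 1) * z) w k * ?d (n - k)" if "k \<le> n" for k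
      using set_term_mult_binomial[OF that, of w z "u - 1"] assms(2)
      by (simp add: dag_weight_n_True mult.assoc)
    then show ?thesis
      by (simp add: dag_source_poly_expansion[of w n u] sum_distrib_left mult.assoc)
  qed
  ultimately show ?thesis
    by (simp add: SetGF_def set_term_def DAG_gf_def)
qed

section \<open>The first two root layers\<close>

lemma sum_dags_card_sources_eq:
  fixes w :: "'a::field"
  assumes "finite V" and "1 + w \<noteq> 0"
  shows "(\<Sum>E | E \<in> dags V \<and> card (sources V E) = k. w ^ card E)
       = of_nat (card V choose k) * (1 + w) ^ (k * (card V - k))
         * dag_source_poly w (card V - k) (1 - (1 + w) powi - int k)"
  using sum_dags_first_layer[OF assms, where k = k and \<phi> = "\<lambda>_. 1"]
  by (simp add: dag_source_poly_def mult_ac)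

lemma sum_dags_first_two_layers:
  fixes w :: "'a::field"
  assumes "finite V" and "1 + w \<noteq> 0"
  shows "(\<Sum>E | E \<in> dags V \<and> card (sources V E) = k \<and> card (sources (V - sources V E) E) = j.
            w ^ card E)
       = of_nat (card V choose k) * (1 + w) ^ (k * (card V - k)) * (1 - (1 + w) powi - int k) ^ j
         * (of_nat ((card V - k) choose j) * (1 + w) ^ (j * (card V - k - j))
            * dag_source_poly w (card V - k - j) (1 - (1 + w) powi - int j))"
proof -
  define m where "m = card V - k"
  define \<phi> :: "nat \<Rightarrow> 'a" where "\<phi> c = (if c = j then 1 else 0)" for c
  have "(\<Sum>E | E \<in> dags V \<and> card (sources V E) = k \<and> card (sources (V - sources V E) E) = j.
            w ^ card E)
      = (\<Sum>E | E \<in> dags V \<and> card (sources V E) = k.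
            w ^ card E * \<phi> (card (sources (V - sources V E) E)))"
    using finite_dags[OF assms(1)] by (intro sum.mono_neutral_cong_left) (auto simp: \<phi>_def)
  also have "\<dots> = of_nat (card V choose k) * (1 + w) ^ (k * m)
      * (\<Sum>E\<in>dags {1..m}. w ^ card E * (1 - (1 + w) powi - int k) ^ card (sources {1..m} E)
           * \<phi> (card (sources {1..m} E)))"
    unfolding sum_dags_first_layer[OF assms] m_def ..
  also have "(\<Sum>E\<in>dags {1..m}. w ^ card E * (1 - (1 + w) powi - int k) ^ card (sources {1..m} E)
           * \<phi> (card (sources {1..m} E)))
      = (1 - (1 + w) powi - int k) ^ j * (\<Sum>E | E \<in> dags {1..m} \<and> card (sources {1..m} E) = j.
           w ^ card E)"
    unfolding sum_distrib_left using finite_dags[of "{1..m}"]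
    by (intro sum.mono_neutral_cong_right) (auto simp: \<phi>_def)
  finally show ?thesis
    using sum_dags_card_sources_eq[of "{1..m}" w j] assms(2) by (simp add: m_def mult_ac)
qed

lemma layer_size_1: "layer_size n E 1 = card (sources {1..n} E)"
  by (simp add: layer_size_def root_layer_def)

lemma layer_size_2: "layer_size n E 2 = card (sources ({1..n} - sources {1..n} E) E)"
  by (simp add: layer_size_def root_layer_def numeral_2_eq_2)

lemma first_layer_weight_sums:
  assumes "0 \<le> z" and "0 < w" and "DAG_finite z w"
  shows "dag_weight_n z w (\<lambda>n E. layer_size n E 1 = k)
           sums (set_term z w k * (SetGF (- ((1 + w) powi - int k) * z) w * DAG_gf z w))"
proof -
  let ?f = "dag_weight_n z w (\<lambda>n E. layer_size n E 1 = k)"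
  let ?u = "1 - (1 + w) powi - int k"
  have weight: "?f n = set_term z w n * (of_nat (n choose k) * 1 ^ k * (1 + w) ^ (k * (n - k)))
      * dag_source_poly w (n - k) ?u" for n
    unfolding dag_weight_n_eq layer_size_1
    using sum_dags_card_sources_eq[of "{1..n}" w k] assms(2) by (simp add: mult_ac)
  have "?f (r + k) = set_term z w k * (set_term z w r * dag_source_poly w r ?u)" for r
    unfolding weight using set_term_mult_binomial[of k "r + k" w z 1] assms(2) by (simp add: mult_ac)
  moreover have "(\<lambda>r. set_term z w r * dag_source_poly w r ?u)
      sums (SetGF (- ((1 + w) powi - int k) * z) w * DAG_gf z w)"
    using dag_source_poly_egf_sums[OF assms(1) _ assms(3), of ?u] assms(2) by simp
  ultimately have "(\<lambda>r. ?f (r + k))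
      sums (set_term z w k * (SetGF (- ((1 + w) powi - int k) * z) w * DAG_gf z w))"
    by (simp add: sums_mult)
  moreover have "?f n = 0" if "n < k" for n
    unfolding weight using that by simp
  ultimately show ?thesis
    by (simp add: sums_zero_iff_shift)
qed

lemma first_two_layers_weight_sums:
  assumes "0 \<le> z" and "0 < w" and "DAG_finite z w"
  shows "dag_weight_n z w (\<lambda>n E. layer_size n E 1 = k \<and> layer_size n E 2 = j)
           sums (set_term z w k * set_term ((1 - (1 + w) powi - int k) * z) w j
                 * (SetGF (- ((1 + w) powi - int j) * z) w * DAG_gf z w))"
proof -
  let ?f = "dag_weight_n z w (\<lambda>n E. layer_size n E 1 = k \<and> layer_size n E 2 = j)"
  let ?u = "\<lambda>i. 1 - (1 + w) powi - int i"
  have weight: "?f n = set_term z w n * (of_nat (n choose k) * 1 ^ k * (1 + w) ^ (k * (n - k)))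
      * (of_nat ((n - k) choose j) * ?u k ^ j * (1 + w) ^ (j * (n - k - j)))
      * dag_source_poly w (n - k - j) (?u j)" for n
    unfolding dag_weight_n_eq layer_size_1 layer_size_2
    using sum_dags_first_two_layers[of "{1..n}" w k j] assms(2) by (simp add: mult_ac)
  have "?f (r + (k + j)) = set_term z w k * set_term (?u k * z) w j
      * (set_term z w r * dag_source_poly w r (?u j))" for r
  proof -
    have "?f (r + (k + j)) = set_term z w k * (set_term z w (r + j)
        * (of_nat ((r + j) choose j) * ?u k ^ j * (1 + w) ^ (j * (r + j - j))))
        * dag_source_poly w r (?u j)"
      unfolding weight using set_term_mult_binomial[of k "r + (k + j)" w z 1] assms(2)
      by (simp add: add.commute add.left_commute)
    also have "\<dots> = set_term z w k * set_term (?u k * z) w j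
        * (set_term z w r * dag_source_poly w r (?u j))"
      using set_term_mult_binomial[of j "r + j" w z "?u k"] assms(2) by (simp add: mult_ac)
    finally show ?thesis .
  qed
  moreover have "(\<lambda>r. set_term z w r * dag_source_poly w r (?u j))
      sums (SetGF (- ((1 + w) powi - int j) * z) w * DAG_gf z w)"
    using dag_source_poly_egf_sums[OF assms(1) _ assms(3), of "?u j"] assms(2) by simp
  ultimately have "(\<lambda>r. ?f (r + (k + j))) sums (set_term z w k * set_term (?u k * z) w j
      * (SetGF (- ((1 + w) powi - int j) * z) w * DAG_gf z w))"
    by (simp add: sums_mult)
  moreover have "?f n = 0" if "n < k + j" for n
    unfolding weight using that by (cases "n < k") auto
  ultimately show ?thesis
    by (simp add: sums_zero_iff_shift)
qed

theorem lemma3: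
  fixes z w :: real and n1 n2 :: nat
  assumes "z > 0" and "w > 0" and "DAG_finite z w"
    and "n1 \<ge> 1"
    and "boltzmann_prob z w (\<lambda>n E. layer_size n E 1 = n1) > 0"
  shows "boltzmann_prob z w (\<lambda>n E. layer_size n E 1 = n1 \<and> layer_size n E 2 = n2)
           / boltzmann_prob z w (\<lambda>n E. layer_size n E 1 = n1)
         = ((1 - (1 + w) powi (- int n1)) * z) ^ n2 / ((1 + w) ^ (n2 choose 2) * fact n2)
           * (SetGF (- ((1 + w) powi (- int n2)) * z) w / SetGF (- ((1 + w) powi (- int n1)) * z) w)"
proof -
  define D where "D = DAG_gf z w"
  define S1 where "S1 = SetGF (- ((1 + w) powi (- int n1)) * z) w"
  define S2 where "S2 = SetGF (- ((1 + w) powi (- int n2)) * z) w"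
  have "0 \<le> z"
    using assms(1) by simp
  have P1: "boltzmann_prob z w (\<lambda>n E. layer_size n E 1 = n1) = set_term z w n1 * (S1 * D) / D"
    using sums_unique[OF first_layer_weight_sums[OF \<open>0 \<le> z\<close> assms(2,3)]]
    by (simp add: boltzmann_prob_def S1_def D_def)
  have P12: "boltzmann_prob z w (\<lambda>n E. layer_size n E 1 = n1 \<and> layer_size n E 2 = n2)
      = set_term z w n1 * set_term ((1 - (1 + w) powi - int n1) * z) w n2 * (S2 * D) / D"
    using sums_unique[OF first_two_layers_weight_sums[OF \<open>0 \<le> z\<close> assms(2,3)]]
    by (simp add: boltzmann_prob_def S2_def D_def)
  have "set_term z w n1 \<noteq> 0" "S1 \<noteq> 0" "D \<noteq> 0"
    using assms(5) unfolding P1 by (auto split: if_splits)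
  with assms(1,2) show ?thesis
    unfolding P1 P12 S1_def[symmetric] S2_def[symmetric] by (simp add: set_term_def field_simps)
qed

end
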